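(* In any execution of the algorithm described in the context, in every round $r>0$ non-faulty processes only sign and broadcast AUX messages whose binary value was proposed by some non-faulty process.
   Context: Model. There are $n$ processes $p_1,\dots,p_n$ ($i$ is the index of $p_i$) communicating over an asynchronous, reliable, point-to-point network: every pair of processes is connected by a channel, message delays are finite but unbounded, and the network does not lose, duplicate, modify or create messages. "Broadcast" means sending the message to every process (including oneself). Messages are signed with unforgeable digital signatures ($\langle m\rangle_j$ denotes message $m$ signed by $p_j$); malformed messages or messages with invalid signatures are ignored. Up to $t$ processes are Byzantine (faulty) and may behave arbitrarily and collude, but cannot forge signatures of other processes; the remaining processes are non-faulty and follow the algorithm. It is assumed that $t<n/3$. Each non-faulty process $p_i$ starts with a proposal $v_i\in\{0,1\}$. Algorithm. Messages are of the form $\mathrm{AUX}[r](v)$ with round $r\in\mathbb{N}$ and $v\in\{0,1\}$, sent as a pair $(\langle \mathrm{AUX}[r](v)\rangle_j,\mathit{proofs})$ where $\mathit{proofs}$ is a set of signed AUX messages. The predicate $\mathsf{is\_valid}(r,est,\mathit{proofs})$ is: if $r=0$ return true; if $r=1$ return true iff $\mathit{proofs}$ contains signed $\mathrm{AUX}[0](est)$ messages from $t+1$ different processes; otherwise let $b=(r-1)\bmod 2$; if $est=b$, return true iff ($r=2$ and $\mathit{proofs}$ contains signed $\mathrm{AUX}[0](b)$ from $t+1$ different processes) or ($\mathit{proofs}$ contains signed $\mathrm{AUX}[r-2](b)$ from $n-t$ different processes); if $est\neq b$, return true iff $\mathit{proofs}$ contains signed $\mathrm{AUX}[r-1](\neg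 b)$ from $n-t$ different processes. Each process $p_i$ with proposal $v_i$ keeps a round counter $r_i$, a set $\mathit{aux\_values}_i$ of signed AUX messages, and timers indexed by naturals (timers $2r$ and $2r+1$ belong to round $r$; starting an already started or expired timer does nothing). It sets $r_i:=0$, $\mathit{aux\_values}_i:=\emptyset$, broadcasts $(\langle\mathrm{AUX}[0](v_i)\rangle_i,\emptyset)$, then repeats forever: (1) $r_i:=r_i+1$; (2) if $i=r_i\bmod n$ (coordinator), run Broadcast; (3) start timer $2r_i$ and wait until it expires; (4) if $i\ne r_i\bmod n$, run Broadcast; (5) wait until $\mathit{aux\_values}_i$ contains round-$r_i$ AUX messages from $n-t$ different processes; (6) start timer $2r_i+1$ and wait until it expires; (7) with $b_i=r_i\bmod 2$, if $\mathit{aux\_values}_i$ contains $\mathrm{AUX}[r_i](b_i)$ from $n-t$ different processes, decide $b_i$ (if not yet decided). Broadcast: let $\mathit{values}_i$ be the set of $v\in\{0,1\}$ such that $\mathsf{is\_valid}(r_i,v,S)$ holds for some $S\subseteq\mathit{aux\_values}_i$; let $bv=(r_i+1)\bmod 2$; if $p_i$ received from $p_{r_i\bmod n}$ a message $(\langle\mathrm{AUX}[r_i](p)\rangle_{r_i\bmod n},\cdot)$ with $p\in\mathit{values}_i$ then $est_i:=p$, else if $bv\in\mathit{values}_i$ then $est_i:=bv$, else $est_i:=\neg bv$; choose $\mathit{proofs}\subseteq\mathit{aux\_values}_i$ with $\mathsf{is\_valid}(r_i,est_i,\mathit{proofs})$ and broadcast $(\langle\mathrm{AUX}[r_i](est_i)\rangle_i,\mathit{proofs})$.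 On receiving $(\langle\mathrm{AUX}[r_j](est_j)\rangle_j,\mathit{proofs})$: if $\mathsf{is\_valid}(r_j,est_j,\mathit{proofs})$, add the signed message and the messages of $\mathit{proofs}$ needed to satisfy the predicate to $\mathit{aux\_values}_i$ (such messages are called valid). Then let $\rho_i$ be the largest round for which $\mathit{aux\_values}_i$ contains messages from $t+1$ different processes, and set every timer with index $\le 2\rho_i$ to expired. *)

theory Defs
  imports Main
begin

text \<open>Processes are indexed 0,...,n-1 (so that the coordinator of round r is
the process with index r mod n).  Binary values: False = 0, True = 1.\<close>

type_synonym smsg = "nat \<times> nat \<times> bool"
  \<comment> \<open>(j, r, v) is the signed message AUX[r](v) signed by process j\<close>
type_synonym nmsg = "smsg \<times> smsg set"
  \<comment> \<open>a pair (signed AUX message, proofs)\<close>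
type_synonym packet = "nat \<times> nat \<times> nmsg"
  \<comment> \<open>(source, destination, message) on a point-to-point channel\<close>

definition bit_of :: "nat \<Rightarrow> bool" where
  "bit_of k = (k mod 2 = 1)"

definition signers :: "smsg set \<Rightarrow> nat \<Rightarrow> bool \<Rightarrow> nat set" where
  "signers S r v = {j. (j, r, v) \<in> S}"

definition round_signers :: "smsg set \<Rightarrow> nat \<Rightarrow> nat set" where
  "round_signers S r = {j. \<exists>v. (j, r, v) \<in> S}"

definition is_valid :: "nat \<Rightarrow> nat \<Rightarrow> nat \<Rightarrow> bool \<Rightarrow> smsg set \<Rightarrow> bool" where
  "is_valid n t r est proofs =
     (if r = 0 then True
      else if r = 1 then card (signers proofs 0 est) \<ge> t + 1
      else (let b = bit_of (r - 1) in
            if est = b then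
              (r = 2 \<and> card (signers proofs 0 b) \<ge> t + 1)
              \<or> card (signers proofs (r - 2) b) \<ge> n - t
            else card (signers proofs (r - 1) (\<not> b)) \<ge> n - t))"

datatype pcs = Init | Loop | Wait1 | Wait2 | Wait3
  \<comment> \<open>Init: before the initial broadcast; Loop: about to execute step (1);
      Wait1: waiting for timer 2r (step 3); Wait2: step (5); Wait3: timer 2r+1 (step 6)\<close>

record lstate =
  rnd :: nat
  pc :: pcs
  auxv :: "smsg set"
  started :: "nat set"
  expired :: "nat set"
  decided :: "bool option"
  rcvd :: "packet set"

record config =
  loc :: "nat \<Rightarrow> lstate"
  net :: "packet set"    \<comment> \<open>packets in transit\<close>
  sent :: "packet set"   \<comment> \<open>all packets ever sent\<close>

definition init_lstate :: lstate where
  "init_lstate = \<lparr>rnd = 0, pc = Init, auxv = {}, started = {}, expired = {},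
                  decided = None, rcvd = {}\<rparr>"

definition init_config :: config where
  "init_config = \<lparr>loc = (\<lambda>_. init_lstate), net = {}, sent = {}\<rparr>"

definition known_sigs :: "config \<Rightarrow> smsg set" where
  "known_sigs c = (\<Union>(src, dst, m, P) \<in> sent c. insert m P)"

definition upd_loc :: "config \<Rightarrow> nat \<Rightarrow> lstate \<Rightarrow> config" where
  "upd_loc c i s = c\<lparr>loc := (loc c)(i := s)\<rparr>"

definition send :: "config \<Rightarrow> packet set \<Rightarrow> config" where
  "send c ps = c\<lparr>net := net c \<union> ps, sent := sent c \<union> ps\<rparr>"

definition bcast_pkts :: "nat \<Rightarrow> nat \<Rightarrow> nat \<Rightarrow> bool \<Rightarrow> smsg set \<Rightarrow> packet set" where
  "bcast_pkts n i r est prf = {(i, j, ((i, r, est), prf)) | j. j < n}"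

definition bvalues :: "nat \<Rightarrow> nat \<Rightarrow> lstate \<Rightarrow> bool set" where
  "bvalues n t s = {v. \<exists>S \<subseteq> auxv s. is_valid n t (rnd s) v S}"

definition coord_vals :: "nat \<Rightarrow> nat \<Rightarrow> lstate \<Rightarrow> bool set" where
  "coord_vals n t s = {p. p \<in> bvalues n t s \<and>
      (\<exists>d prf. (rnd s mod n, d, ((rnd s mod n, rnd s, p), prf)) \<in> rcvd s)}"

text \<open>Admissible choices (est, proofs) of procedure Broadcast in local state s
(the choice is nondeterministic where the informal description leaves it open).\<close>
definition bcast_ok :: "nat \<Rightarrow> nat \<Rightarrow> lstate \<Rightarrow> bool \<Rightarrow> smsg set \<Rightarrow> bool" where
  "bcast_ok n t s est prf =
     ((if coord_vals n t s \<noteq> {} then est \<in> coord_vals n t s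
       else if bit_of (rnd s + 1) \<in> bvalues n t s then est = bit_of (rnd s + 1)
       else est = (\<not> bit_of (rnd s + 1)))
      \<and> prf \<subseteq> auxv s \<and> finite prf \<and> is_valid n t (rnd s) est prf)"

definition forced_expired :: "nat \<Rightarrow> smsg set \<Rightarrow> nat set" where
  "forced_expired t S = {k. \<exists>\<rho>. card (round_signers S \<rho>) \<ge> t + 1 \<and> k \<le> 2 * \<rho>}"

inductive step :: "nat \<Rightarrow> nat \<Rightarrow> nat set \<Rightarrow> (nat \<Rightarrow> bool) \<Rightarrow> config \<Rightarrow> config \<Rightarrow> bool"
  for n t F prp where
  init_step: "\<lbrakk> i < n; i \<notin> F; pc (loc c i) = Init \<rbrakk> \<Longrightarrow>
     step n t F prp c
       (send (upd_loc c i ((loc c i)\<lparr>rnd := 0, auxv := {}, pc := Loop\<rparr>))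
             (bcast_pkts n i 0 (prp i) {}))"
| loop_coord: "\<lbrakk> i < n; i \<notin> F; pc (loc c i) = Loop;
     s1 = (loc c i)\<lparr>rnd := Suc (rnd (loc c i))\<rparr>; i = rnd s1 mod n;
     bcast_ok n t s1 est prf \<rbrakk> \<Longrightarrow>
     step n t F prp c
       (send (upd_loc c i (s1\<lparr>started := insert (2 * rnd s1) (started s1), pc := Wait1\<rparr>))
             (bcast_pkts n i (rnd s1) est prf))"
| loop_other: "\<lbrakk> i < n; i \<notin> F; pc (loc c i) = Loop;
     s1 = (loc c i)\<lparr>rnd := Suc (rnd (loc c i))\<rparr>; i \<noteq> rnd s1 mod n \<rbrakk> \<Longrightarrow>
     step n t F prp c
       (upd_loc c i (s1\<lparr>started := insert (2 * rnd s1) (started s1), pc := Wait1\<rparr>))"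
| wait1_coord: "\<lbrakk> i < n; i \<notin> F; pc (loc c i) = Wait1; 2 * rnd (loc c i) \<in> expired (loc c i);
     i = rnd (loc c i) mod n \<rbrakk> \<Longrightarrow>
     step n t F prp c (upd_loc c i ((loc c i)\<lparr>pc := Wait2\<rparr>))"
| wait1_other: "\<lbrakk> i < n; i \<notin> F; pc (loc c i) = Wait1; 2 * rnd (loc c i) \<in> expired (loc c i);
     i \<noteq> rnd (loc c i) mod n; bcast_ok n t (loc c i) est prf \<rbrakk> \<Longrightarrow>
     step n t F prp c
       (send (upd_loc c i ((loc c i)\<lparr>pc := Wait2\<rparr>))
             (bcast_pkts n i (rnd (loc c i)) est prf))"
| wait2: "\<lbrakk> i < n; i \<notin> F; pc (loc c i) = Wait2;
     card (round_signers (auxv (loc c i)) (rnd (loc c i))) \<ge> n - t \<rbrakk> \<Longrightarrow>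
     step n t F prp c
       (upd_loc c i ((loc c i)\<lparr>started := insert (2 * rnd (loc c i) + 1) (started (loc c i)),
                                pc := Wait3\<rparr>))"
| wait3: "\<lbrakk> i < n; i \<notin> F; pc (loc c i) = Wait3; 2 * rnd (loc c i) + 1 \<in> expired (loc c i);
     s = loc c i; b = bit_of (rnd s) \<rbrakk> \<Longrightarrow>
     step n t F prp c
       (upd_loc c i (s\<lparr>decided :=
           (if card (signers (auxv s) (rnd s) b) \<ge> n - t \<and> decided s = None
            then Some b else decided s), pc := Loop\<rparr>))"
| timer_expire: "\<lbrakk> i < n; i \<notin> F; k \<in> started (loc c i) \<rbrakk> \<Longrightarrow>
     step n t F prp c
       (upd_loc c i ((loc c i)\<lparr>expired := insert k (expired (loc c i))\<rparr>))"
| receive_valid: "\<lbrakk> i < n; i \<notin> F; pc (loc c i) \<noteq> Init;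
     (src, i, ((j, r, v), prf)) \<in> net c; is_valid n t r v prf;
     P \<subseteq> prf; is_valid n t r v P;
     s = loc c i; A = auxv s \<union> insert (j, r, v) P \<rbrakk> \<Longrightarrow>
     step n t F prp c
       (upd_loc (c\<lparr>net := net c - {(src, i, ((j, r, v), prf))}\<rparr>) i
          (s\<lparr>rcvd := insert (src, i, ((j, r, v), prf)) (rcvd s), auxv := A,
             expired := expired s \<union> forced_expired t A\<rparr>))"
| receive_invalid: "\<lbrakk> i < n; i \<notin> F; pc (loc c i) \<noteq> Init;
     (src, i, ((j, r, v), prf)) \<in> net c; \<not> is_valid n t r v prf; s = loc c i \<rbrakk> \<Longrightarrow>
     step n t F prp c
       (upd_loc (c\<lparr>net := net c - {(src, i, ((j, r, v), prf))}\<rparr>) i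
          (s\<lparr>rcvd := insert (src, i, ((j, r, v), prf)) (rcvd s),
             expired := expired s \<union> forced_expired t (auxv s)\<rparr>))"
| byzantine: "\<lbrakk> f \<in> F; d < n; finite prf;
     \<forall>(a, r, v) \<in> insert m prf. a < n \<and> (a \<in> F \<or> (a, r, v) \<in> known_sigs c) \<rbrakk> \<Longrightarrow>
     step n t F prp c (send c {(f, d, (m, prf))})"

definition reachable :: "nat \<Rightarrow> nat \<Rightarrow> nat set \<Rightarrow> (nat \<Rightarrow> bool) \<Rightarrow> config \<Rightarrow> bool" where
  "reachable n t F prp c = (step n t F prp)\<^sup>*\<^sup>* init_config c"

end

theory Submission
  imports Defs
begin

text \<open>Call a set of signatures sound if every signature of a non-faulty process on
  \<open>AUX[0](v)\<close> carries that process's proposal and every one on \<open>AUX[r](v)\<close>, \<open>r > 0\<close>, carries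
  a value proposed by some non-faulty process. The signatures present in the system stay
  sound: Byzantine processes can only add their own signatures or replay existing ones, and a
  non-faulty process signs \<open>AUX[r](est)\<close>, \<open>r > 0\<close>, only with a valid justification, which
  contains \<open>t + 1\<close> signatures on \<open>est\<close> and hence one by a non-faulty process.\<close>

definition honestly_proposed :: "nat \<Rightarrow> nat set \<Rightarrow> (nat \<Rightarrow> bool) \<Rightarrow> bool \<Rightarrow> bool" where
  "honestly_proposed n F prp v = (\<exists>k<n. k \<notin> F \<and> prp k = v)"

definition sound_sigs :: "nat \<Rightarrow> nat set \<Rightarrow> (nat \<Rightarrow> bool) \<Rightarrow> smsg set \<Rightarrow> bool" where
  "sound_sigs n F prp K = (\<forall>(a, r, v) \<in> K. a < n \<and>
      (a \<notin> F \<longrightarrow> (if r = 0 then v = prp a else honestly_proposed n F prp v)))"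

lemma sound_sigs_insert [simp]:
  "sound_sigs n F prp (insert (i, r, v) K) \<longleftrightarrow> sound_sigs n F prp K \<and> i < n \<and>
     (i \<notin> F \<longrightarrow> (if r = 0 then v = prp i else honestly_proposed n F prp v))"
  by (auto simp: sound_sigs_def)

lemma sound_sigs_Un [simp]:
  "sound_sigs n F prp (K \<union> L) \<longleftrightarrow> sound_sigs n F prp K \<and> sound_sigs n F prp L"
  unfolding sound_sigs_def by (rule ball_Un)

lemma sound_sigs_mono: "sound_sigs n F prp K \<Longrightarrow> L \<subseteq> K \<Longrightarrow> sound_sigs n F prp L"
  unfolding sound_sigs_def by blast

text \<open>Every branch of \<^const>\<open>is_valid\<close> for \<open>r > 0\<close> demands \<open>t + 1\<close> or \<open>n - t > t\<close>
  signatures on \<open>est\<close> itself; in the last branch the required value \<open>\<not> b\<close> is \<open>est\<close>.\<close>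
lemma is_valid_support:
  assumes "is_valid n t r est prf" "0 < r" "3 * t < n"
  obtains r' where "t + 1 \<le> card (signers prf r' est)"
proof -
  have quorum: "t + 1 \<le> n - t" using assms(3) by linarith
  consider "r = 1" | "1 < r" "est = bit_of (r - 1)" | "1 < r" "est = (\<not> bit_of (r - 1))"
    using assms(2) by linarith
  then show ?thesis
  proof cases
    case 1
    with assms(1) show ?thesis by (intro that[of 0]) (simp add: is_valid_def)
  next
    case 2
    with assms(1) have "t + 1 \<le> card (signers prf 0 est) \<or> n - t \<le> card (signers prf (r - 2) est)"
      by (auto simp: is_valid_def)
    with quorum show ?thesis by (metis le_trans that)
  next
    case 3
    with assms(1) have "n - t \<le> card (signers prf (r - 1) est)"
      by (auto simp: is_valid_def)
    with quorum show ?thesis by (metis le_trans that)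
  qed
qed

lemma is_valid_honestly_proposed:
  assumes "is_valid n t r est prf" "0 < r" "3 * t < n" "finite F" "card F \<le> t"
    and "sound_sigs n F prp K" "prf \<subseteq> K"
  shows "honestly_proposed n F prp est"
proof -
  obtain r' where support: "t + 1 \<le> card (signers prf r' est)"
    using is_valid_support assms(1-3) by blast
  have "\<not> signers prf r' est \<subseteq> F"
    using card_mono[OF assms(4), of "signers prf r' est"] support assms(5) by linarith
  then obtain j where "(j, r', est) \<in> K" "j \<notin> F"
    using assms(7) by (auto simp: signers_def)
  with assms(6) show ?thesis
    by (auto simp: sound_sigs_def honestly_proposed_def split: if_splits)
qed

lemma known_sigs_send:
  "known_sigs (send c ps) = known_sigs c \<union> (\<Union>(src, dst, m, P) \<in> ps. insert m P)"
  unfolding known_sigs_def send_def by auto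

lemma known_sigs_bcast_pkts:
  "known_sigs (send c (bcast_pkts n i r est prf)) \<subseteq> insert (i, r, est) (known_sigs c \<union> prf)"
  unfolding known_sigs_send bcast_pkts_def by auto

lemma known_sigs_upd_loc [simp]: "known_sigs (upd_loc c i s) = known_sigs c"
  unfolding known_sigs_def upd_loc_def by simp

lemma known_sigs_net_update [simp]: "known_sigs (c\<lparr>net := N\<rparr>) = known_sigs c"
  unfolding known_sigs_def by simp

lemma send_simps [simp]:
  "loc (send c ps) = loc c" "net (send c ps) = net c \<union> ps" "sent (send c ps) = sent c \<union> ps"
  by (simp_all add: send_def)

lemma upd_loc_simps [simp]:
  "loc (upd_loc c i s) = (loc c)(i := s)" "net (upd_loc c i s) = net c" "sent (upd_loc c i s) = sent c"
  by (simp_all add: upd_loc_def)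

text \<open>The round clause guarantees that the broadcasts of step (4) take place in a round \<open>r > 0\<close>.\<close>
definition local_inv :: "smsg set \<Rightarrow> lstate \<Rightarrow> bool" where
  "local_inv K s \<longleftrightarrow> auxv s \<subseteq> K \<and> (pc s \<in> {Init, Loop} \<or> 0 < rnd s)"

definition config_inv :: "nat \<Rightarrow> nat set \<Rightarrow> (nat \<Rightarrow> bool) \<Rightarrow> config \<Rightarrow> bool" where
  "config_inv n F prp c \<longleftrightarrow> sound_sigs n F prp (known_sigs c) \<and> net c \<subseteq> sent c \<and>
     (\<forall>i. local_inv (known_sigs c) (loc c i))"

lemma local_inv_mono: "local_inv K s \<Longrightarrow> K \<subseteq> L \<Longrightarrow> local_inv L s"
  unfolding local_inv_def by auto

lemma config_inv_init: "config_inv n F prp init_config"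
  by (simp add: config_inv_def local_inv_def sound_sigs_def known_sigs_def init_config_def
      init_lstate_def)

lemma config_inv_upd_loc:
  "config_inv n F prp c \<Longrightarrow> local_inv (known_sigs c) s \<Longrightarrow> config_inv n F prp (upd_loc c i s)"
  unfolding config_inv_def by simp

lemma config_inv_receive:
  "config_inv n F prp c \<Longrightarrow> N \<subseteq> net c \<Longrightarrow> local_inv (known_sigs c) s \<Longrightarrow>
    config_inv n F prp (upd_loc (c\<lparr>net := N\<rparr>) i s)"
  unfolding config_inv_def by auto

lemma config_inv_bcast:
  assumes "config_inv n F prp c" "local_inv (known_sigs c) s" "prf \<subseteq> known_sigs c"
    and "sound_sigs n F prp (insert (i, r, est) (known_sigs c))"
  shows "config_inv n F prp (send (upd_loc c i s) (bcast_pkts n i r est prf))"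
    (is "config_inv n F prp ?c'")
proof -
  have "known_sigs ?c' \<subseteq> insert (i, r, est) (known_sigs c)"
    using known_sigs_bcast_pkts[of "upd_loc c i s" n i r est "prf"] assms(3) by auto
  with assms(4) have "sound_sigs n F prp (known_sigs ?c')"
    by (rule sound_sigs_mono)
  moreover have "known_sigs c \<subseteq> known_sigs ?c'"
    by (simp add: known_sigs_send)
  ultimately show ?thesis
    using assms(1,2) unfolding config_inv_def by (auto intro: local_inv_mono)
qed

lemma config_inv_forge:
  assumes "config_inv n F prp c"
    and "\<forall>(a, r, v) \<in> insert m P. a < n \<and> (a \<in> F \<or> (a, r, v) \<in> known_sigs c)"
  shows "config_inv n F prp (send c {(f, d, (m, P))})"
proof -
  have known: "known_sigs (send c {(f, d, (m, P))}) = known_sigs c \<union> insert m P"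
    by (simp add: known_sigs_send)
  have "sound_sigs n F prp (insert m P)"
    using assms unfolding config_inv_def sound_sigs_def by fast
  with assms(1) show ?thesis
    unfolding config_inv_def known sound_sigs_Un by (auto intro: local_inv_mono)
qed

lemma config_inv_honest_bcast:
  assumes "config_inv n F prp c" "local_inv (known_sigs c) s'" "i < n"
    and "bcast_ok n t s est prf" "0 < rnd s" "auxv s \<subseteq> known_sigs c"
    and "3 * t < n" "finite F" "card F \<le> t"
  shows "config_inv n F prp (send (upd_loc c i s') (bcast_pkts n i (rnd s) est prf))"
proof (rule config_inv_bcast[OF assms(1,2)])
  have valid: "is_valid n t (rnd s) est prf" and "prf \<subseteq> auxv s"
    using assms(4) by (auto simp: bcast_ok_def)
  then show "prf \<subseteq> known_sigs c" using assms(6) by blast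
  moreover have "sound_sigs n F prp (known_sigs c)"
    using assms(1) by (simp add: config_inv_def)
  ultimately have "honestly_proposed n F prp est"
    using is_valid_honestly_proposed[OF valid assms(5,7-9)] by blast
  with \<open>sound_sigs n F prp (known_sigs c)\<close>
  show "sound_sigs n F prp (insert (i, rnd s, est) (known_sigs c))"
    using assms(3,5) by simp
qed

lemma step_preserves_config_inv:
  assumes "step n t F prp c c'" "config_inv n F prp c" "3 * t < n" "finite F" "card F \<le> t"
  shows "config_inv n F prp c'"
proof -
  have sound: "sound_sigs n F prp (known_sigs c)"
    and locals: "\<And>i. local_inv (known_sigs c) (loc c i)"
    using assms(2) by (simp_all add: config_inv_def)
  note honest_bcast = config_inv_honest_bcast[OF assms(2) _ _ _ _ _ assms(3-5)]
  note upd = config_inv_upd_loc[OF assms(2)]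
  from assms(1) show ?thesis
  proof cases
    case (init_step i)
    show ?thesis unfolding init_step(1)
      by (rule config_inv_bcast[OF assms(2)])
        (use sound init_step(2) in \<open>simp_all add: local_inv_def\<close>)
  next
    case (loop_coord i s1 est proofs)
    show ?thesis unfolding loop_coord(1)
      by (rule honest_bcast[OF _ loop_coord(2,7)])
        (use locals[of i] loop_coord(5) in \<open>simp_all add: local_inv_def\<close>)
  next
    case (loop_other i s1)
    show ?thesis unfolding loop_other(1)
      by (rule upd) (use locals[of i] loop_other(5) in \<open>simp add: local_inv_def\<close>)
  next
    case (wait1_coord i)
    show ?thesis unfolding wait1_coord(1)
      by (rule upd) (use locals[of i] wait1_coord(4) in \<open>auto simp: local_inv_def\<close>)
  next
    case (wait1_other i est proofs)
    show ?thesis unfolding wait1_other(1)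
      by (rule honest_bcast[OF _ wait1_other(2,7)])
        (use locals[of i] wait1_other(4) in \<open>auto simp: local_inv_def\<close>)
  next
    case (wait2 i)
    show ?thesis unfolding wait2(1)
      by (rule upd) (use locals[of i] wait2(4) in \<open>auto simp: local_inv_def\<close>)
  next
    case (wait3 i s b)
    show ?thesis unfolding wait3(1)
      by (rule upd) (use locals[of i] wait3(6) in \<open>auto simp: local_inv_def\<close>)
  next
    case (timer_expire i k)
    show ?thesis unfolding timer_expire(1)
      by (rule upd) (use locals[of i] in \<open>simp add: local_inv_def\<close>)
  next
    case (receive_valid i src j r v proofs P s A)
    have received: "insert (j, r, v) P \<subseteq> known_sigs c"
      using receive_valid(5,7) assms(2) unfolding config_inv_def known_sigs_def by blast
    show ?thesis unfolding receive_valid(1)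
      by (rule config_inv_receive[OF assms(2)])
        (use locals[of i] received receive_valid(9,10) in \<open>auto simp: local_inv_def\<close>)
  next
    case (receive_invalid i src j r v proofs s)
    show ?thesis unfolding receive_invalid(1)
      by (rule config_inv_receive[OF assms(2)])
        (use locals[of i] receive_invalid(7) in \<open>auto simp: local_inv_def\<close>)
  next
    case byzantine
    show ?thesis unfolding byzantine(1) by (rule config_inv_forge[OF assms(2) byzantine(5)])
  qed
qed

lemma reachable_config_inv:
  assumes "reachable n t F prp c" "3 * t < n" "finite F" "card F \<le> t"
  shows "config_inv n F prp c"
  using assms(1) unfolding reachable_def
  by (induction rule: rtranclp_induct)
    (auto intro: config_inv_init step_preserves_config_inv assms(2-4))

theorem lemma2:
  fixes n t :: nat and F :: "nat set" and prp :: "nat \<Rightarrow> bool" and c :: config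
  assumes "3 * t < n"
    and "F \<subseteq> {..<n}" and "card F \<le> t"
    and "reachable n t F prp c"
    and "(j, r, v) \<in> known_sigs c" and "j < n" and "j \<notin> F" and "r > 0"
  shows "\<exists>k < n. k \<notin> F \<and> prp k = v"
proof -
  have "finite F" using assms(2) finite_subset by blast
  with assms(1,3,4) have "sound_sigs n F prp (known_sigs c)"
    using reachable_config_inv config_inv_def by blast
  with assms(5,7,8) show ?thesis
    unfolding sound_sigs_def honestly_proposed_def by fastforce
qed

end
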